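(* Let $A$ be a vector bundle over $M$, $X$ a vector field of degree $b-1$ on the graded manifold $A[1]$, and $B_X$ as defined below. Then for all $E_1,\dots,E_b\in\Gamma(A)$, $f\in C^\infty(M)$ and $1\le j\le b$: $B_X(E_1,\dots,fE_j,\dots,E_b)=f\,B_X(E_1,\dots,E_b)+(-1)^j\langle a_X(f),E_1\wedge\cdots\wedge\widehat{E_j}\wedge\cdots\wedge E_b\rangle E_j$.
   Context: $A[1]$ is the graded manifold with function algebra $C^\infty(A[1])=\Gamma(\wedge^\bullet A^\vee)$; a vector field of degree $d$ on $A[1]$ is a graded derivation of degree $d$ of $\Gamma(\wedge^\bullet A^\vee)$. For such $X$ of degree $b-1$, $a_X:C^\infty(M)\to\Gamma(\wedge^{b-1}A^\vee)$ and $\partial_X:\Gamma(A^\vee)\to\Gamma(\wedge^bA^\vee)$ denote the restrictions of $X$ (so $a_X$ is a derivation and $\partial_X(fE)=a_X(f)E+f\partial_X(E)$). The pairing $\langle\eta,X_1\wedge\cdots\wedge X_p\rangle=\eta(X_1,\dots,X_p)$ for $\eta\in\Gamma(\wedge^pA^\vee)$ (and $0$ if degrees differ). $B_X:\Gamma(A)^{\times b}\to\Gamma(A)$ is defined by $\langle W,B_X(E_1,\dots,E_b)\rangle=(-1)^{b-1}\big(\langle\partial_X W,E_1\wedge\cdots\wedge E_b\rangle-\sum_{i=1}^b(-1)^{b-i}\langle a_X\langle W,E_i\rangle,E_1\wedge\cdots\wedge\widehat{E_i}\wedge\cdots\wedge E_b\rangle\big)$ for all $W\in\Gamma(A^\vee)$.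 *)

theory Defs
  imports Main Complex_Main
begin

text \<open>Algebraic model of the sections of a vector bundle A over M.
  The ring 'r plays the role of C^infty(M) (a commutative real algebra),
  'e the role of Gamma(A), a module over 'r via scale.
  Gamma(A^dual): 'r-linear maps 'e => 'r; the pairing <W,E> is W E.
  Gamma(wedge^p A^dual): alternating 'r-multilinear maps on lists of length p
  (value 0 on lists of other length); the pairing <eta, E1 ^ ... ^ Ep> is eta [E1,...,Ep].\<close>

definition dual_sections :: "('r::comm_ring_1 \<Rightarrow> 'e::ab_group_add \<Rightarrow> 'e) \<Rightarrow> ('e \<Rightarrow> 'r) set" where
  "dual_sections scale = {W. \<forall>c x y. W (scale c x + y) = c * W x + W y}"

definition forms :: "('r::comm_ring_1 \<Rightarrow> 'e::ab_group_add \<Rightarrow> 'e) \<Rightarrow> nat \<Rightarrow> ('e list \<Rightarrow> 'r) set" where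
  "forms scale p = {\<eta>.
     (\<forall>xs. length xs \<noteq> p \<longrightarrow> \<eta> xs = 0) \<and>
     (\<forall>xs i c x y. length xs = p \<longrightarrow> i < p \<longrightarrow>
        \<eta> (xs[i := scale c x + y]) = c * \<eta> (xs[i := x]) + \<eta> (xs[i := y])) \<and>
     (\<forall>xs i k. length xs = p \<longrightarrow> i < k \<longrightarrow> k < p \<longrightarrow> xs ! i = xs ! k \<longrightarrow> \<eta> xs = 0)}"

definition omit :: "nat \<Rightarrow> 'a list \<Rightarrow> 'a list" where
  "omit i xs = take i xs @ drop (Suc i) xs"

text \<open>Wedge product of a (b-1)-form alpha with a 1-form W, evaluated on
  [E1,...,Eb]: sum over i=1..b of (-1)^(b-i) alpha(E1..^Ei..Eb) W(Ei).\<close>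
definition wedge1 :: "('e list \<Rightarrow> 'r::comm_ring_1) \<Rightarrow> ('e \<Rightarrow> 'r) \<Rightarrow> 'e list \<Rightarrow> 'r" where
  "wedge1 \<alpha> W xs = (\<Sum>i\<in>{1..length xs}. (-1) ^ (length xs - i) * \<alpha> (omit (i - 1) xs) * W (xs ! (i - 1)))"

text \<open>A vector field X of degree b-1 on A[1], through its restrictions
  a_X : C^infty(M) -> Gamma(wedge^(b-1) A^dual) and d_X : Gamma(A^dual) -> Gamma(wedge^b A^dual).\<close>
definition vector_field_restrictions ::
  "('r::{comm_ring_1,real_algebra_1} \<Rightarrow> 'e::ab_group_add \<Rightarrow> 'e) \<Rightarrow> nat \<Rightarrow>
   ('r \<Rightarrow> 'e list \<Rightarrow> 'r) \<Rightarrow> (('e \<Rightarrow> 'r) \<Rightarrow> 'e list \<Rightarrow> 'r) \<Rightarrow> bool" where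
  "vector_field_restrictions scale b aX dX \<longleftrightarrow>
     (\<forall>f. aX f \<in> forms scale (b - 1)) \<and>
     (\<forall>f g xs. aX (f + g) xs = aX f xs + aX g xs) \<and>
     (\<forall>c f xs. aX (c *\<^sub>R f) xs = c *\<^sub>R aX f xs) \<and>
     (\<forall>f g xs. aX (f * g) xs = f * aX g xs + g * aX f xs) \<and>
     (\<forall>W\<in>dual_sections scale. dX W \<in> forms scale b) \<and>
     (\<forall>W\<in>dual_sections scale. \<forall>V\<in>dual_sections scale. \<forall>xs.
        dX (\<lambda>e. W e + V e) xs = dX W xs + dX V xs) \<and>
     (\<forall>W\<in>dual_sections scale. \<forall>c xs. dX (\<lambda>e. c *\<^sub>R W e) xs = c *\<^sub>R dX W xs) \<and>
     (\<forall>W\<in>dual_sections scale. \<forall>f xs.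
        dX (\<lambda>e. f * W e) xs = wedge1 (aX f) W xs + f * dX W xs)"

definition separated_by_duals :: "('r::comm_ring_1 \<Rightarrow> 'e::ab_group_add \<Rightarrow> 'e) \<Rightarrow> bool" where
  "separated_by_duals scale \<longleftrightarrow>
     (\<forall>u v. (\<forall>W\<in>dual_sections scale. W u = W v) \<longrightarrow> u = v)"

definition is_B :: "('r::comm_ring_1 \<Rightarrow> 'e::ab_group_add \<Rightarrow> 'e) \<Rightarrow> nat \<Rightarrow>
   ('r \<Rightarrow> 'e list \<Rightarrow> 'r) \<Rightarrow> (('e \<Rightarrow> 'r) \<Rightarrow> 'e list \<Rightarrow> 'r) \<Rightarrow> ('e list \<Rightarrow> 'e) \<Rightarrow> bool" where
  "is_B scale b aX dX BX \<longleftrightarrow>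
     (\<forall>Es. length Es = b \<longrightarrow> (\<forall>W\<in>dual_sections scale.
        W (BX Es) = (-1) ^ (b - 1) *
          (dX W Es - (\<Sum>i\<in>{1..b}. (-1) ^ (b - i) * aX (W (Es ! (i - 1))) (omit (i - 1) Es)))))"

end

theory Submission
  imports Defs
begin

text \<open>Pair \<open>B\<^sub>X\<close> with an arbitrary dual section \<open>W\<close>. Since \<open>\<partial>\<^sub>X W\<close> and every \<open>a\<^sub>X g\<close> are
  forms, rescaling the \<open>j\<close>-th argument by \<open>f\<close> multiplies every term of the defining formula by
  \<open>f\<close>, except the \<open>j\<close>-th term of the sum: there \<open>a\<^sub>X\<close> is applied to \<open>\<langle>W, f E\<^sub>j\<rangle> = f \<langle>W, E\<^sub>j\<rangle>\<close>,
  and the Leibniz rule produces the extra term \<open>\<langle>W, E\<^sub>j\<rangle> a\<^sub>X(f)\<close>. Both sides of the claim thus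
  have the same pairing with every \<open>W\<close>, and dual sections separate sections.\<close>

lemma dual_sections_add:
  assumes "module scale" "W \<in> dual_sections scale"
  shows "W (x + y) = W x + W y"
proof -
  have "W (scale 1 x + y) = 1 * W x + W y"
    using assms(2) unfolding dual_sections_def by blast
  then show ?thesis using module.scale_one[OF assms(1)] by simp
qed

lemma dual_sections_scale:
  assumes "module scale" "W \<in> dual_sections scale"
  shows "W (scale c x) = c * W x"
proof -
  have "W 0 = 0" using dual_sections_add[OF assms, of 0 0] by simp
  moreover have "W (scale c x + 0) = c * W x + W 0"
    using assms(2) unfolding dual_sections_def by blast
  ultimately show ?thesis by simp
qed

lemma forms_scale_nth:
  assumes "module scale" "\<eta> \<in> forms scale p" "length xs = p" "k < p"
  shows "\<eta> (xs[k := scale c (xs ! k)]) = c * \<eta> xs"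
proof -
  have lin: "\<eta> (xs[k := scale c x + y]) = c * \<eta> (xs[k := x]) + \<eta> (xs[k := y])" for c x y
    using assms(2-4) unfolding forms_def by blast
  have "\<eta> (xs[k := 0]) = 0"
    using lin[of 1 0 0] module.scale_one[OF assms(1)] by simp
  then show ?thesis
    using lin[of c "xs ! k" 0] by simp
qed

lemma omit_list_update_same: "omit i (xs[i := v]) = omit i xs"
  unfolding omit_def by (simp add: take_update_cancel drop_update_cancel)

lemma length_omit: "i < length xs \<Longrightarrow> length (omit i xs) = length xs - 1"
  unfolding omit_def by simp

lemma nth_omit:
  "i < length xs \<Longrightarrow> k < length xs - 1 \<Longrightarrow>
   omit i xs ! k = (if k < i then xs ! k else xs ! Suc k)"
  unfolding omit_def by (auto simp: nth_append min_def)

lemma omit_list_update_other: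
  assumes "i < length xs" "k < length xs" "i \<noteq> k"
  defines "k' \<equiv> if k < i then k else k - 1"
  shows "omit i (xs[k := g (xs ! k)]) = (omit i xs)[k' := g (omit i xs ! k')]"
proof (rule nth_equalityI)
  show "length (omit i (xs[k := g (xs ! k)])) = length ((omit i xs)[k' := g (omit i xs ! k')])"
    using assms by (simp add: length_omit)
  fix n assume "n < length (omit i (xs[k := g (xs ! k)]))"
  then show "omit i (xs[k := g (xs ! k)]) ! n = (omit i xs)[k' := g (omit i xs ! k')] ! n"
    using assms by (auto simp: length_omit nth_omit nth_list_update)
qed

lemma neg_one_power_diff_mult:
  assumes "k < b"
  shows "(-1) ^ (b - 1) * (-1) ^ (b - Suc k) = ((-1) :: 'a::ring_1) ^ k"
proof -
  have "b - 1 = k + (b - Suc k)" using assms by simp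
  then have "(-1) ^ (b - 1) * (-1) ^ (b - Suc k) =
      ((-1) :: 'a) ^ k * ((-1) ^ (b - Suc k) * (-1) ^ (b - Suc k))"
    by (metis power_add mult.assoc)
  then show ?thesis by (simp flip: power_add add: mult_2[symmetric] power_mult)
qed

definition anchor_sum :: "('r::comm_ring_1 \<Rightarrow> 'e list \<Rightarrow> 'r) \<Rightarrow> ('e \<Rightarrow> 'r) \<Rightarrow> 'e list \<Rightarrow> 'r" where
  "anchor_sum aX W Es =
     (\<Sum>i\<in>{1..length Es}. (-1) ^ (length Es - i) * aX (W (Es ! (i - 1))) (omit (i - 1) Es))"

lemma anchor_sum_scale_nth:
  assumes "module scale" "W \<in> dual_sections scale"
    and forms: "\<And>g. aX g \<in> forms scale (length Es - 1)"
    and Leibniz: "\<And>g h xs. aX (g * h) xs = g * aX h xs + h * aX g xs"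
    and "k < length Es"
  shows "anchor_sum aX W (Es[k := scale f (Es ! k)]) =
         f * anchor_sum aX W Es + (-1) ^ (length Es - Suc k) * W (Es ! k) * aX f (omit k Es)"
proof -
  let ?Es' = "Es[k := scale f (Es ! k)]"
  let ?b = "length Es"
  define T where "T L i = (-1) ^ (?b - i) * aX (W (L ! (i - 1))) (omit (i - 1) L)" for L i
  have summand: "T ?Es' i = f * T Es i +
      (if i = Suc k then (-1) ^ (?b - Suc k) * W (Es ! k) * aX f (omit k Es) else 0)"
    if i: "i \<in> {1..?b}" for i
  proof (cases "i = Suc k")
    case True
    have "W (?Es' ! k) = f * W (Es ! k)"
      using dual_sections_scale[OF assms(1,2)] \<open>k < ?b\<close> by simp
    then show ?thesis
      using True by (simp add: T_def omit_list_update_same Leibniz algebra_simps)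
  next
    case False
    define k' where "k' = (if k < i - 1 then k else k - 1)"
    have ne: "i - 1 \<noteq> k" and il: "i - 1 < ?b" using False i by auto
    have "k' < length (omit (i - 1) Es)"
      using ne il \<open>k < ?b\<close> by (auto simp: k'_def length_omit)
    then have "aX (W (Es ! (i - 1))) (omit (i - 1) ?Es') =
        f * aX (W (Es ! (i - 1))) (omit (i - 1) Es)"
      using omit_list_update_other[OF il \<open>k < ?b\<close> ne, of "scale f"]
        forms_scale_nth[OF assms(1) forms] il
      by (simp add: k'_def length_omit)
    then show ?thesis
      using False ne by (simp add: T_def algebra_simps)
  qed
  have "anchor_sum aX W ?Es' = (\<Sum>i\<in>{1..?b}. T ?Es' i)"
    by (simp add: anchor_sum_def T_def)
  also have "\<dots> = f * (\<Sum>i\<in>{1..?b}. T Es i) +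
      (-1) ^ (?b - Suc k) * W (Es ! k) * aX f (omit k Es)"
    using \<open>k < ?b\<close> by (simp add: summand sum.distrib sum_distrib_left)
  finally show ?thesis
    by (simp add: anchor_sum_def T_def)
qed

lemma is_B_pairing:
  assumes "is_B scale b aX dX BX" "length Es = b" "W \<in> dual_sections scale"
  shows "W (BX Es) = (-1) ^ (b - 1) * (dX W Es - anchor_sum aX W Es)"
  using assms unfolding is_B_def anchor_sum_def by blast

lemma is_B_pairing_scale_nth:
  assumes M: "module scale"
    and vf: "vector_field_restrictions scale b aX dX"
    and B: "is_B scale b aX dX BX"
    and W: "W \<in> dual_sections scale"
    and len: "length Es = b" and "k < b"
  shows "W (BX (Es[k := scale f (Es ! k)])) =
         W (scale f (BX Es) + scale ((-1) ^ Suc k * aX f (omit k Es)) (Es ! k))"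
proof -
  let ?Es' = "Es[k := scale f (Es ! k)]"
  let ?A = "aX f (omit k Es)"
  have forms: "\<And>g. aX g \<in> forms scale (length Es - 1)"
    and Leibniz: "\<And>g h xs. aX (g * h) xs = g * aX h xs + h * aX g xs"
    and dX: "dX W \<in> forms scale b"
    using vf W len unfolding vector_field_restrictions_def by blast+
  have "W (BX ?Es') = (-1) ^ (b - 1) * (dX W ?Es' - anchor_sum aX W ?Es')"
    using is_B_pairing[OF B _ W] len by simp
  also have "\<dots> = f * ((-1) ^ (b - 1) * (dX W Es - anchor_sum aX W Es))
                  - (-1) ^ (b - 1) * (-1) ^ (b - Suc k) * (W (Es ! k) * ?A)"
    using forms_scale_nth[OF M dX len \<open>k < b\<close>] anchor_sum_scale_nth[OF M W forms Leibniz]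
      len \<open>k < b\<close>
    by (simp add: algebra_simps)
  also have "\<dots> = f * W (BX Es) - ((-1) ^ (b - 1) * (-1) ^ (b - Suc k)) * (W (Es ! k) * ?A)"
    unfolding is_B_pairing[OF B len W] by (simp add: mult.assoc)
  also have "\<dots> = f * W (BX Es) + (-1) ^ Suc k * ?A * W (Es ! k)"
    unfolding neg_one_power_diff_mult[OF \<open>k < b\<close>] by (simp add: algebra_simps)
  also have "\<dots> = W (scale f (BX Es) + scale ((-1) ^ Suc k * ?A) (Es ! k))"
    using dual_sections_add[OF M W] dual_sections_scale[OF M W] by simp
  finally show ?thesis .
qed

theorem proposition14p2:
  fixes scale :: "'r::{comm_ring_1,real_algebra_1} \<Rightarrow> 'e::ab_group_add \<Rightarrow> 'e"
    and aX :: "'r \<Rightarrow> 'e list \<Rightarrow> 'r"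
    and dX :: "('e \<Rightarrow> 'r) \<Rightarrow> 'e list \<Rightarrow> 'r"
    and BX :: "'e list \<Rightarrow> 'e"
    and b j :: nat and Es :: "'e list" and f :: 'r
  assumes "module scale"
    and "separated_by_duals scale"
    and "vector_field_restrictions scale b aX dX"
    and "is_B scale b aX dX BX"
    and "length Es = b" and "1 \<le> j" and "j \<le> b"
  shows "BX (Es[j - 1 := scale f (Es ! (j - 1))]) =
         scale f (BX Es) + scale ((-1) ^ j * aX f (omit (j - 1) Es)) (Es ! (j - 1))"
proof -
  have "j - 1 < b" and index: "Suc (j - 1) = j" using assms(6,7) by auto
  have "W (BX (Es[j - 1 := scale f (Es ! (j - 1))])) =
      W (scale f (BX Es) + scale ((-1) ^ j * aX f (omit (j - 1) Es)) (Es ! (j - 1)))"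
    if "W \<in> dual_sections scale" for W
    using is_B_pairing_scale_nth[OF assms(1,3,4) that assms(5) \<open>j - 1 < b\<close>]
    by (simp only: index)
  then show ?thesis
    using assms(2) unfolding separated_by_duals_def by blast
qed

end
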